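(* Let $A\in\mathbb{R}^{n\times n}$ with $K_A=\mathbb{R}^n_+\cap R(A)\ne\{0\}$. If $A$ is strictly copositive on $K_A$, i.e. $x^TAx>0$ for every nonzero $x\in K_A$, then $A$ is a Karamardian matrix.
   Context: For $M\in\mathbb{R}^{n\times n}$ let $K_M=\mathbb{R}^n_+\cap R(M)$ and $K_M^*=\{y: x^Ty\ge 0\ \forall x\in K_M\}$ (one has $K_M^*=\mathbb{R}^n_++N(M^T)$, with interior $\{a+b: a>0,\ b\in N(M^T)\}$). For $q$, LCP$(M,K_M,q)$ is to find $x\in K_M$ with $Mx+q\in K_M^*$ and $x^T(Mx+q)=0$. $M$ is a Karamardian matrix if $K_M\ne\{0\}$ and there exists $d$ in the interior of $K_M^*$ such that both LCP$(M,K_M,0)$ and LCP$(M,K_M,d)$ have $x=0$ as their only solution. *)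

theory Defs
  imports "HOL-Analysis.Analysis"
begin

definition nonneg_orthant :: "(real ^ 'n) set" where
  "nonneg_orthant = {x. \<forall>i. 0 \<le> x $ i}"

definition range_mat :: "real ^ 'n ^ 'n \<Rightarrow> (real ^ 'n) set" where
  "range_mat M = {M *v x | x. True}"

definition K_cone :: "real ^ 'n ^ 'n \<Rightarrow> (real ^ 'n) set" where
  "K_cone M = nonneg_orthant \<inter> range_mat M"

definition dual_cone :: "(real ^ 'n) set \<Rightarrow> (real ^ 'n) set" where
  "dual_cone K = {y. \<forall>x\<in>K. 0 \<le> x \<bullet> y}"

definition LCP_sol :: "real ^ 'n ^ 'n \<Rightarrow> (real ^ 'n) set \<Rightarrow> real ^ 'n \<Rightarrow> real ^ 'n \<Rightarrow> bool" where
  "LCP_sol M K q x \<longleftrightarrow> x \<in> K \<and> M *v x + q \<in> dual_cone K \<and> x \<bullet> (M *v x + q) = 0"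

definition karamardian :: "real ^ 'n ^ 'n \<Rightarrow> bool" where
  "karamardian M \<longleftrightarrow> K_cone M \<noteq> {0} \<and>
     (\<exists>d \<in> interior (dual_cone (K_cone M)).
        (\<forall>x. LCP_sol M (K_cone M) 0 x \<longleftrightarrow> x = 0) \<and>
        (\<forall>x. LCP_sol M (K_cone M) d x \<longleftrightarrow> x = 0))"

end

theory Submission
  imports Defs
begin

text \<open>Since \<open>K_A\<close> lies in the nonnegative orthant, every strictly positive vector \<open>d\<close>
  (e.g. the all-ones vector) is an interior point of \<open>K_A\<^sup>*\<close>. For any \<open>q \<in> K_A\<^sup>*\<close>, a
  solution \<open>x\<close> of LCP\<open>(A, K_A, q)\<close> satisfies \<open>x\<^sup>TAx = -x\<^sup>Tq \<le> 0\<close>, so strict copositivity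
  forces \<open>x = 0\<close>; this applies to both \<open>q = 0\<close> and \<open>q = d\<close>.\<close>

lemma open_positive_orthant: "open {y::real^'n. \<forall>i. 0 < y $ i}"
proof -
  have "{y::real^'n. \<forall>i. 0 < y $ i} = (\<Inter>i. {y. 0 < y $ i})" by auto
  moreover have "open (\<Inter>i. {y::real^'n. 0 < y $ i})"
    by (rule open_INT) (auto intro: open_halfspace_component_gt_cart)
  ultimately show ?thesis by simp
qed

lemma positive_orthant_subset_dual_cone:
  assumes "K \<subseteq> nonneg_orthant"
  shows "{y::real^'n. \<forall>i. 0 < y $ i} \<subseteq> dual_cone K"
proof
  fix y :: "real^'n" assume y: "y \<in> {y. \<forall>i. 0 < y $ i}"
  have "0 \<le> x \<bullet> y" if "x \<in> K" for x
  proof -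
    have "\<forall>i. 0 \<le> x $ i" using that assms by (auto simp: nonneg_orthant_def)
    then show ?thesis using y unfolding inner_vec_def
      by (auto intro!: sum_nonneg simp: less_imp_le)
  qed
  then show "y \<in> dual_cone K" by (simp add: dual_cone_def)
qed

lemma positive_in_interior_dual_cone:
  assumes "K \<subseteq> nonneg_orthant" and "\<forall>i. 0 < d $ i"
  shows "d \<in> interior (dual_cone K)"
  using interior_maximal[OF positive_orthant_subset_dual_cone[OF assms(1)] open_positive_orthant]
    assms(2) by blast

lemma K_cone_subset_nonneg_orthant: "K_cone M \<subseteq> nonneg_orthant"
  by (simp add: K_cone_def)

lemma zero_in_K_cone: "0 \<in> K_cone M"
  unfolding K_cone_def nonneg_orthant_def range_mat_def by (auto intro!: exI[of _ 0])

lemma LCP_sol_iff_zero_if_strictly_copositive: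
  assumes "0 \<in> K" and "q \<in> dual_cone K"
    and copos: "\<forall>x \<in> K. x \<noteq> 0 \<longrightarrow> x \<bullet> (M *v x) > 0"
  shows "LCP_sol M K q x \<longleftrightarrow> x = 0"
proof
  assume "LCP_sol M K q x"
  then have xK: "x \<in> K" and compl: "x \<bullet> (M *v x) + x \<bullet> q = 0"
    unfolding LCP_sol_def by (auto simp: inner_add_right)
  have "0 \<le> x \<bullet> q" using assms(2) xK by (simp add: dual_cone_def)
  with compl have "\<not> x \<bullet> (M *v x) > 0" by linarith
  then show "x = 0" using copos xK by blast
next
  assume "x = 0"
  then show "LCP_sol M K q x" using assms(1,2) by (simp add: LCP_sol_def)
qed

theorem mainTheorem18:
  fixes A :: "real ^ 'n ^ 'n"
  assumes "K_cone A \<noteq> {0}"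
    and "\<forall>x \<in> K_cone A. x \<noteq> 0 \<longrightarrow> x \<bullet> (A *v x) > 0"
  shows "karamardian A"
proof -
  define d :: "real^'n" where "d = (\<chi> i. 1)"
  have d_int: "d \<in> interior (dual_cone (K_cone A))"
    by (rule positive_in_interior_dual_cone[OF K_cone_subset_nonneg_orthant]) (simp add: d_def)
  then have "d \<in> dual_cone (K_cone A)"
    using interior_subset by blast
  moreover have "0 \<in> dual_cone (K_cone A)"
    by (simp add: dual_cone_def)
  ultimately have "LCP_sol A (K_cone A) q x \<longleftrightarrow> x = 0" if "q \<in> {0, d}" for q x
    using that LCP_sol_iff_zero_if_strictly_copositive[OF zero_in_K_cone _ assms(2)] by blast
  then show ?thesis
    unfolding karamardian_def using assms(1) d_int by blast
qed

end
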